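(* Let $G$ be a connected graph on $n\ge2$ vertices labeled so that $\mathbb{M}_1\ge\mathbb{M}_2\ge\cdots\ge\mathbb{M}_n$, where $\mathbb{M}_i=\frac{\sum_{j=1}^n d_{ij}\mathbb{D}_j}{\mathbb{D}_i}$. Let $N=\max_{1\le i,j\le n}d_{ij}\mathbb{D}_j/\mathbb{D}_i$. Then for $1\le i\le n$, \[\rho(\mathbb{D}(G))\le \frac{\mathbb{M}_i-N+\sqrt{(\mathbb{M}_i+N)^2+4N\sum_{k=1}^{i-1}(\mathbb{M}_k-\mathbb{M}_i)}}{2}.\] Equality holds if and only if $\mathbb{M}_1=\cdots=\mathbb{M}_n$, or for some $2\le t\le i$: (i) $d_{kl}\mathbb{D}_l/\mathbb{D}_k=N$ for all $1\le k\le n$, $1\le l\le t-1$, $k\ne l$; (ii) $\mathbb{M}_t=\cdots=\mathbb{M}_n$.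
   Context: $\mathbb{D}(G)=(d_{ij})$ is the distance matrix of $G$; $\mathbb{D}_i=\sum_j d_{ij}$ is the transmission of $v_i$; $\mathbb{M}_i$ is the average transmission; $\rho$ is the spectral radius. An empty sum equals $0$. *)

theory Defs
  imports "Jordan_Normal_Form.Spectral_Radius"
begin

definition simple_graph :: "nat \<Rightarrow> (nat \<Rightarrow> nat \<Rightarrow> bool) \<Rightarrow> bool" where
  "simple_graph n E \<longleftrightarrow>
     (\<forall>i j. E i j \<longrightarrow> i < n \<and> j < n) \<and>
     (\<forall>i j. E i j \<longrightarrow> E j i) \<and> (\<forall>i. \<not> E i i)"

definition is_walk :: "nat \<Rightarrow> (nat \<Rightarrow> nat \<Rightarrow> bool) \<Rightarrow> nat list \<Rightarrow> bool" where
  "is_walk n E xs \<longleftrightarrow> xs \<noteq> [] \<and> set xs \<subseteq> {..<n} \<and>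
     (\<forall>k. Suc k < length xs \<longrightarrow> E (xs ! k) (xs ! Suc k))"

definition connected_graph :: "nat \<Rightarrow> (nat \<Rightarrow> nat \<Rightarrow> bool) \<Rightarrow> bool" where
  "connected_graph n E \<longleftrightarrow>
     (\<forall>i<n. \<forall>j<n. \<exists>xs. is_walk n E xs \<and> hd xs = i \<and> last xs = j)"

definition gdist :: "nat \<Rightarrow> (nat \<Rightarrow> nat \<Rightarrow> bool) \<Rightarrow> nat \<Rightarrow> nat \<Rightarrow> nat" where
  "gdist n E i j = (LEAST k. \<exists>xs. is_walk n E xs \<and> hd xs = i \<and> last xs = j \<and> length xs = Suc k)"

text \<open>Distance matrix D(G), as a complex matrix (so that the AFP spectral radius applies).\<close>
definition dist_matrix :: "nat \<Rightarrow> (nat \<Rightarrow> nat \<Rightarrow> bool) \<Rightarrow> complex mat" where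
  "dist_matrix n E = mat n n (\<lambda>(i, j). of_nat (gdist n E i j))"

definition transmission :: "nat \<Rightarrow> (nat \<Rightarrow> nat \<Rightarrow> bool) \<Rightarrow> nat \<Rightarrow> real" where
  "transmission n E i = (\<Sum>j<n. real (gdist n E i j))"

definition avg_transmission :: "nat \<Rightarrow> (nat \<Rightarrow> nat \<Rightarrow> bool) \<Rightarrow> nat \<Rightarrow> real" where
  "avg_transmission n E i =
     (\<Sum>j<n. real (gdist n E i j) * transmission n E j) / transmission n E i"

end

theory Submission
  imports Defs
begin

text \<open>Conjugating D(G) by the diagonal matrix of transmissions gives a nonnegative matrix with zero
  diagonal, entries at most N and row sums M_k. For the bound phi of index i (the larger root of
  (x - M_i)(x + N) = N sum_{k<i} (M_k - M_i)), the vector with entries 1 + (M_j - M_i)/(phi + N)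
  for j < i and 1 otherwise satisfies A u \<le> phi u: row m falls short of equality by
  sum_{j<i, j\<noteq>m} (N - a_mj)(u_j - 1), plus M_i - M_m when m \<ge> i. Comparing an eigenvector of D(G)
  with the smallest multiple of u dominating it (a Collatz-Wielandt argument) yields rho \<le> phi;
  positivity of the off-diagonal distances turns equality into A u = phi u, which is then read
  off row by row.\<close>

section \<open>Bounding the spectral radius by a positive super-eigenvector\<close>

lemma mat_of_real_mult_vec_index:
  assumes "k < n" and "dim_vec v = n"
  shows "(mat n n (\<lambda>(k, j). complex_of_real (d k j)) *\<^sub>v v) $ k = (\<Sum>j<n. of_real (d k j) * v $ j)"
  using assms by (simp add: scalar_prod_def row_def lessThan_atLeast0)

lemma eigenvalue_norm_sub_eigenvector:
  fixes d :: "nat \<Rightarrow> nat \<Rightarrow> real"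
  assumes lam: "lam \<in> spectrum (mat n n (\<lambda>(k, j). complex_of_real (d k j)))"
    and d_nonneg: "\<And>k j. k < n \<Longrightarrow> j < n \<Longrightarrow> 0 \<le> d k j"
  obtains y k0 where "\<forall>j<n. 0 \<le> y j" and "k0 < n" and "0 < y k0"
    and "\<forall>k<n. cmod lam * y k \<le> (\<Sum>j<n. d k j * y j)"
proof -
  let ?D = "mat n n (\<lambda>(k, j). complex_of_real (d k j))"
  obtain v where v: "v \<in> carrier_vec n" "v \<noteq> 0\<^sub>v n" "?D *\<^sub>v v = lam \<cdot>\<^sub>v v"
    using lam unfolding spectrum_def eigenvalue_def eigenvector_def by auto
  obtain k0 where k0: "k0 < n" "v $ k0 \<noteq> 0"
    using v(1,2) by (metis carrier_vecD eq_vecI index_zero_vec)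
  have "cmod lam * cmod (v $ k) \<le> (\<Sum>j<n. d k j * cmod (v $ j))" if k: "k < n" for k
  proof -
    have "lam * v $ k = (\<Sum>j<n. of_real (d k j) * v $ j)"
      using arg_cong[OF v(3), of "\<lambda>w. w $ k"] mat_of_real_mult_vec_index[OF k] v(1) k by simp
    then have "cmod lam * cmod (v $ k) = cmod (\<Sum>j<n. of_real (d k j) * v $ j)"
      by (metis norm_mult)
    also have "\<dots> \<le> (\<Sum>j<n. cmod (of_real (d k j) * v $ j))" by (rule norm_sum)
    also have "\<dots> = (\<Sum>j<n. d k j * cmod (v $ j))"
      using d_nonneg k by (intro sum.cong) (auto simp: norm_mult)
    finally show ?thesis .
  qed
  then show thesis using k0 by (intro that[of "\<lambda>j. cmod (v $ j)" k0]) auto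
qed

lemma scale_to_touch:
  fixes u y :: "nat \<Rightarrow> real"
  assumes u_pos: "\<And>j. j < n \<Longrightarrow> 0 < u j" and y_nonneg: "\<And>j. j < n \<Longrightarrow> 0 \<le> y j"
    and "k0 < n" and "0 < y k0"
  obtains s k where "0 < s" and "k < n" and "y k = s * u k" and "\<And>j. j < n \<Longrightarrow> y j \<le> s * u j"
proof -
  let ?f = "\<lambda>j. y j / u j"
  obtain k where k: "k < n" "?f k = Max (?f ` {..<n})"
    using Max_in[of "?f ` {..<n}"] \<open>k0 < n\<close> by fastforce
  have le: "?f j \<le> ?f k" if "j < n" for j using k that by simp
  show thesis
  proof (rule that[of "?f k" k])
    show "0 < ?f k" using le[OF \<open>k0 < n\<close>] \<open>0 < y k0\<close> u_pos[OF \<open>k0 < n\<close>]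
      by (smt (verit) divide_pos_pos)
    show "y k = ?f k * u k" using u_pos[OF k(1)] by simp
    show "y j \<le> ?f k * u j" if "j < n" for j
      using le[OF that] u_pos[OF that] by (simp add: field_simps)
  qed (fact k(1))
qed

lemma sub_eigenvalue_le_super_eigenvalue:
  fixes d :: "nat \<Rightarrow> nat \<Rightarrow> real"
  assumes d_nonneg: "\<And>k j. k < n \<Longrightarrow> j < n \<Longrightarrow> 0 \<le> d k j"
    and u_pos: "\<And>j. j < n \<Longrightarrow> 0 < u j"
    and super: "\<And>k. k < n \<Longrightarrow> (\<Sum>j<n. d k j * u j) \<le> phi * u k"
    and y_nonneg: "\<And>j. j < n \<Longrightarrow> 0 \<le> y j" and "k0 < n" and "0 < y k0"
    and sub: "\<And>k. k < n \<Longrightarrow> rho * y k \<le> (\<Sum>j<n. d k j * y j)"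
  shows "rho \<le> phi"
proof -
  obtain s k where s: "0 < s" "k < n" "y k = s * u k" "\<And>j. j < n \<Longrightarrow> y j \<le> s * u j"
    using scale_to_touch[of n u y k0] u_pos y_nonneg \<open>k0 < n\<close> \<open>0 < y k0\<close> by blast
  have "rho * y k \<le> (\<Sum>j<n. d k j * y j)" using sub[OF s(2)] .
  also have "\<dots> \<le> s * (\<Sum>j<n. d k j * u j)"
    unfolding sum_distrib_left using s(4) d_nonneg s(2)
    by (intro sum_mono) (simp add: mult.left_commute[of s] mult_left_mono)
  also have "\<dots> \<le> phi * y k" using super[OF s(2)] s(1,3) by simp
  finally show ?thesis using s u_pos by (simp add: mult_le_cancel_right)
qed

text \<open>Equality forces the sub-eigenvector to be a multiple of u, by positivity of the
  off-diagonal entries in the row where the two vectors touch.\<close>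

lemma super_eigenvector_eigen_if_eq:
  fixes d :: "nat \<Rightarrow> nat \<Rightarrow> real"
  assumes d_nonneg: "\<And>k j. k < n \<Longrightarrow> j < n \<Longrightarrow> 0 \<le> d k j"
    and d_pos: "\<And>k j. k < n \<Longrightarrow> j < n \<Longrightarrow> k \<noteq> j \<Longrightarrow> 0 < d k j"
    and u_pos: "\<And>j. j < n \<Longrightarrow> 0 < u j"
    and super: "\<And>k. k < n \<Longrightarrow> (\<Sum>j<n. d k j * u j) \<le> phi * u k"
    and y_nonneg: "\<And>j. j < n \<Longrightarrow> 0 \<le> y j" and "k0 < n" and "0 < y k0"
    and sub: "\<And>k. k < n \<Longrightarrow> phi * y k \<le> (\<Sum>j<n. d k j * y j)"
    and "m < n"
  shows "(\<Sum>j<n. d m j * u j) = phi * u m"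
proof -
  obtain s k where s: "0 < s" "k < n" "y k = s * u k" "\<And>j. j < n \<Longrightarrow> y j \<le> s * u j"
    using scale_to_touch[of n u y k0] u_pos y_nonneg \<open>k0 < n\<close> \<open>0 < y k0\<close> by blast
  have "s * (\<Sum>j<n. d k j * u j) \<le> s * (phi * u k)" using super[OF s(2)] s(1) by simp
  also have "\<dots> = phi * y k" using s(3) by simp
  also have "\<dots> \<le> (\<Sum>j<n. d k j * y j)" using sub[OF s(2)] .
  finally have "(\<Sum>j<n. d k j * (s * u j - y j)) \<le> 0"
    by (simp add: sum_subtractf sum_distrib_left algebra_simps)
  moreover have nonneg: "\<forall>j\<in>{..<n}. 0 \<le> d k j * (s * u j - y j)"
    using s(2,4) d_nonneg by simp
  ultimately have "(\<Sum>j<n. d k j * (s * u j - y j)) = 0"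
    by (meson order_antisym sum_nonneg)
  then have zero: "\<forall>j\<in>{..<n}. d k j * (s * u j - y j) = 0"
    using nonneg by (subst (asm) sum_nonneg_eq_0_iff) auto
  have y_eq: "y j = s * u j" if "j < n" for j
  proof (cases "j = k")
    case False
    then have "0 < d k j" using d_pos s(2) that by simp
    moreover have "d k j * (s * u j - y j) = 0" using zero that by blast
    ultimately show ?thesis by simp
  qed (use s(3) in simp)
  have "s * (phi * u m) \<le> s * (\<Sum>j<n. d m j * u j)"
    using sub[OF \<open>m < n\<close>] y_eq \<open>m < n\<close> by (simp add: sum_distrib_left algebra_simps)
  then show ?thesis using super[OF \<open>m < n\<close>] s(1) by (simp add: mult_le_cancel_left)
qed

theorem spectral_radius_le_super_eigenvalue:
  fixes d :: "nat \<Rightarrow> nat \<Rightarrow> real"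
  assumes "0 < n" and d_nonneg: "\<And>k j. k < n \<Longrightarrow> j < n \<Longrightarrow> 0 \<le> d k j"
    and u_pos: "\<And>j. j < n \<Longrightarrow> 0 < u j"
    and super: "\<And>k. k < n \<Longrightarrow> (\<Sum>j<n. d k j * u j) \<le> phi * u k"
  shows "spectral_radius (mat n n (\<lambda>(k, j). complex_of_real (d k j))) \<le> phi"
proof -
  let ?D = "mat n n (\<lambda>(k, j). complex_of_real (d k j))"
  obtain lam where lam: "lam \<in> spectrum ?D" and rho: "spectral_radius ?D = cmod lam"
    using spectral_radius_mem_max(1)[of ?D n] \<open>0 < n\<close> by auto
  obtain y k0 where y: "\<forall>j<n. 0 \<le> y j" "k0 < n" "0 < y k0"
    "\<forall>k<n. cmod lam * y k \<le> (\<Sum>j<n. d k j * y j)"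
    by (rule eigenvalue_norm_sub_eigenvector[OF lam d_nonneg])
  then show ?thesis
    using sub_eigenvalue_le_super_eigenvalue[OF d_nonneg u_pos super, of y k0 "cmod lam"] y rho
    by auto
qed

theorem spectral_radius_eq_super_eigenvalue_iff:
  fixes d :: "nat \<Rightarrow> nat \<Rightarrow> real"
  assumes "0 < n" and d_nonneg: "\<And>k j. k < n \<Longrightarrow> j < n \<Longrightarrow> 0 \<le> d k j"
    and d_pos: "\<And>k j. k < n \<Longrightarrow> j < n \<Longrightarrow> k \<noteq> j \<Longrightarrow> 0 < d k j"
    and u_pos: "\<And>j. j < n \<Longrightarrow> 0 < u j"
    and super: "\<And>k. k < n \<Longrightarrow> (\<Sum>j<n. d k j * u j) \<le> phi * u k"
  shows "spectral_radius (mat n n (\<lambda>(k, j). complex_of_real (d k j))) = phi \<longleftrightarrow>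
    (\<forall>k<n. (\<Sum>j<n. d k j * u j) = phi * u k)"
proof
  let ?D = "mat n n (\<lambda>(k, j). complex_of_real (d k j))"
  assume eq: "spectral_radius ?D = phi"
  obtain lam where lam: "lam \<in> spectrum ?D" and rho: "spectral_radius ?D = cmod lam"
    using spectral_radius_mem_max(1)[of ?D n] \<open>0 < n\<close> by auto
  obtain y k0 where y: "\<forall>j<n. 0 \<le> y j" "k0 < n" "0 < y k0"
    "\<forall>k<n. cmod lam * y k \<le> (\<Sum>j<n. d k j * y j)"
    by (rule eigenvalue_norm_sub_eigenvector[OF lam d_nonneg])
  then show "\<forall>k<n. (\<Sum>j<n. d k j * u j) = phi * u k"
    using super_eigenvector_eigen_if_eq[OF d_nonneg d_pos u_pos super, of y k0] y eq rho
    by auto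
next
  let ?D = "mat n n (\<lambda>(k, j). complex_of_real (d k j))"
  assume eigen: "\<forall>k<n. (\<Sum>j<n. d k j * u j) = phi * u k"
  define w where "w = vec n (\<lambda>j. complex_of_real (u j))"
  have "?D *\<^sub>v w = of_real phi \<cdot>\<^sub>v w"
  proof (rule eq_vecI)
    fix k assume "k < dim_vec (of_real phi \<cdot>\<^sub>v w)"
    then have k: "k < n" by (simp add: w_def)
    have "(?D *\<^sub>v w) $ k = of_real (\<Sum>j<n. d k j * u j)"
      using mat_of_real_mult_vec_index[OF k, of w d] by (simp add: w_def)
    then show "(?D *\<^sub>v w) $ k = (of_real phi \<cdot>\<^sub>v w) $ k" using eigen k by (simp add: w_def)
  qed (simp add: w_def)
  moreover have "w $ 0 \<noteq> 0\<^sub>v n $ 0"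
    using u_pos[OF \<open>0 < n\<close>] \<open>0 < n\<close> by (simp add: w_def)
  ultimately have "of_real phi \<in> spectrum ?D"
    unfolding spectrum_def eigenvalue_def eigenvector_def by (force simp: w_def)
  then have "cmod (of_real phi) \<le> spectral_radius ?D"
    using spectral_radius_mem_max(2)[of ?D n] \<open>0 < n\<close> by (metis image_eqI mat_carrier)
  moreover have "0 \<le> phi"
  proof -
    have "0 \<le> (\<Sum>j<n. d 0 j * u j)"
      using d_nonneg u_pos \<open>0 < n\<close> by (intro sum_nonneg) (simp add: less_imp_le)
    then show ?thesis using eigen u_pos[OF \<open>0 < n\<close>] \<open>0 < n\<close> by (simp add: zero_le_mult_iff)
  qed
  ultimately show "spectral_radius ?D = phi"
    using spectral_radius_le_super_eigenvalue[OF \<open>0 < n\<close> d_nonneg u_pos super] by simp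
qed

section \<open>A positive test vector for a matrix with sorted row sums\<close>

text \<open>In the application a = scaled_dist n E, i.e. D(G) conjugated by the diagonal matrix of
  transmissions, r k = M_k, and l is the index i of the bound.\<close>

locale sorted_row_sums =
  fixes n l :: nat and a :: "nat \<Rightarrow> nat \<Rightarrow> real" and N :: real and r :: "nat \<Rightarrow> real"
  assumes diag: "\<And>k. k < n \<Longrightarrow> a k k = 0"
    and nonneg: "\<And>k j. k < n \<Longrightarrow> j < n \<Longrightarrow> 0 \<le> a k j"
    and le_N: "\<And>k j. k < n \<Longrightarrow> j < n \<Longrightarrow> a k j \<le> N"
    and row_sum: "\<And>k. k < n \<Longrightarrow> r k = (\<Sum>j<n. a k j)"
    and sorted: "\<And>p q. p \<le> q \<Longrightarrow> q < n \<Longrightarrow> r q \<le> r p"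
    and l_less: "l < n" and N_pos: "0 < N"
begin

definition excess :: real where
  "excess = (\<Sum>k<l. r k - r l)"

definition phi :: real where
  "phi = (r l - N + sqrt ((r l + N)\<^sup>2 + 4 * N * excess)) / 2"

definition lift :: "nat \<Rightarrow> real" where
  "lift j = (if j < l then (r j - r l) / (phi + N) else 0)"

definition test_vec :: "nat \<Rightarrow> real" where
  "test_vec j = 1 + lift j"

definition deficit :: "nat \<Rightarrow> real" where
  "deficit m = (\<Sum>j<l. if j = m then 0 else (N - a m j) * lift j)"

lemma phi_expanded: "phi = (r l - N + sqrt ((r l + N)\<^sup>2 + 4 * N * (\<Sum>k<l. r k - r l))) / 2"
  unfolding phi_def excess_def ..

lemma excess_nonneg: "0 \<le> excess"
  unfolding excess_def using sorted l_less by (intro sum_nonneg) auto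

lemma r_l_nonneg: "0 \<le> r l"
  using row_sum[OF l_less] nonneg l_less by (auto intro: sum_nonneg)

lemma phi_ge: "r l \<le> phi"
proof -
  have "r l + N = sqrt ((r l + N)\<^sup>2)" using r_l_nonneg N_pos by simp
  also have "\<dots> \<le> sqrt ((r l + N)\<^sup>2 + 4 * N * excess)"
    using excess_nonneg N_pos by (intro real_sqrt_le_mono) auto
  finally show ?thesis unfolding phi_def by simp
qed

lemma phi_plus_N_pos: "0 < phi + N"
  using phi_ge r_l_nonneg N_pos by linarith

lemma phi_quadratic: "(phi - r l) * (phi + N) = N * excess"
proof -
  let ?s = "sqrt ((r l + N)\<^sup>2 + 4 * N * excess)"
  have "?s = 2 * phi - r l + N" unfolding phi_def by (simp add: field_simps)
  moreover have "?s\<^sup>2 = (r l + N)\<^sup>2 + 4 * N * excess"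
    using excess_nonneg N_pos by (intro real_sqrt_pow2) simp
  ultimately have "(2 * phi - r l + N)\<^sup>2 = (r l + N)\<^sup>2 + 4 * N * excess" by simp
  then show ?thesis by (simp add: power2_eq_square algebra_simps)
qed

lemma r_l_plus_N_sum_lift: "r l + N * (\<Sum>j<l. lift j) = phi"
proof -
  have "(\<Sum>j<l. lift j) = excess / (phi + N)"
    unfolding lift_def excess_def by (simp add: sum_divide_distrib)
  then have "N * (\<Sum>j<l. lift j) = N * excess / (phi + N)" by simp
  also have "\<dots> = phi - r l" using phi_quadratic phi_plus_N_pos by (simp add: field_simps)
  finally show ?thesis by simp
qed

lemma lift_nonneg: "0 \<le> lift j"
  unfolding lift_def using sorted l_less phi_plus_N_pos by auto

lemma lift_pos: "j < l \<Longrightarrow> r j \<noteq> r l \<Longrightarrow> 0 < lift j"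
  using sorted[of j l] l_less phi_plus_N_pos unfolding lift_def by auto

lemma test_vec_pos: "0 < test_vec j"
  unfolding test_vec_def using lift_nonneg[of j] by linarith

lemma deficit_nonneg: "m < n \<Longrightarrow> 0 \<le> deficit m"
  unfolding deficit_def using le_N l_less lift_nonneg by (intro sum_nonneg) auto

lemma deficit_eq_0_iff:
  "m < n \<Longrightarrow> deficit m = 0 \<longleftrightarrow> (\<forall>j<l. j \<noteq> m \<longrightarrow> (N - a m j) * lift j = 0)"
  unfolding deficit_def using le_N l_less lift_nonneg by (subst sum_nonneg_eq_0_iff) auto

lemma row_lift:
  assumes "m < n"
  shows "(\<Sum>j<n. a m j * lift j) = N * (\<Sum>j<l. lift j) - (if m < l then N * lift m else 0) - deficit m"
proof -
  have "(\<Sum>j<n. a m j * lift j) = (\<Sum>j<l. a m j * lift j)"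
    using l_less by (intro sum.mono_neutral_right) (auto simp: lift_def)
  moreover have "(\<Sum>j<l. N * lift j) = (\<Sum>j<l. a m j * lift j)
      + (\<Sum>j<l. if j = m then N * lift j else 0) + deficit m"
    unfolding deficit_def sum.distrib[symmetric] using diag[OF assms]
    by (intro sum.cong) (auto simp: algebra_simps)
  ultimately show ?thesis by (simp add: sum_distrib_left sum.delta)
qed

lemma row_test_vec:
  assumes "m < n"
  shows "(\<Sum>j<n. a m j * test_vec j) = phi * test_vec m - (if m < l then 0 else r l - r m) - deficit m"
proof -
  have "(\<Sum>j<n. a m j * test_vec j) = r m + (\<Sum>j<n. a m j * lift j)"
    unfolding test_vec_def row_sum[OF assms] by (simp add: algebra_simps sum.distrib)
  also have "\<dots> = r m - r l + phi - (if m < l then N * lift m else 0) - deficit m"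
    using row_lift[OF assms] r_l_plus_N_sum_lift by simp
  also have "\<dots> = phi * test_vec m - (if m < l then 0 else r l - r m) - deficit m"
  proof (cases "m < l")
    case True
    then have "r m - r l = (phi + N) * lift m" using phi_plus_N_pos by (simp add: lift_def)
    then show ?thesis using True by (simp add: test_vec_def algebra_simps)
  qed (simp add: test_vec_def lift_def)
  finally show ?thesis .
qed

lemma row_test_vec_le: "m < n \<Longrightarrow> (\<Sum>j<n. a m j * test_vec j) \<le> phi * test_vec m"
  using row_test_vec[of m] deficit_nonneg[of m] sorted[of l m] by (cases "m < l") auto

lemma test_vec_eigen_iff:
  "(\<forall>m<n. (\<Sum>j<n. a m j * test_vec j) = phi * test_vec m) \<longleftrightarrow>
   (\<forall>m<n. deficit m = 0) \<and> (\<forall>m. l \<le> m \<and> m < n \<longrightarrow> r m = r l)"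
proof
  assume eigen: "\<forall>m<n. (\<Sum>j<n. a m j * test_vec j) = phi * test_vec m"
  have "deficit m = 0 \<and> (l \<le> m \<longrightarrow> r m = r l)" if "m < n" for m
    using eigen row_test_vec[OF that] deficit_nonneg[OF that] sorted[of l m] that
    by (cases "m < l") auto
  then show "(\<forall>m<n. deficit m = 0) \<and> (\<forall>m. l \<le> m \<and> m < n \<longrightarrow> r m = r l)" by blast
next
  assume conds: "(\<forall>m<n. deficit m = 0) \<and> (\<forall>m. l \<le> m \<and> m < n \<longrightarrow> r m = r l)"
  show "\<forall>m<n. (\<Sum>j<n. a m j * test_vec j) = phi * test_vec m"
  proof (intro allI impI)
    fix m assume "m < n"
    then have "deficit m = 0" and "\<not> m < l \<Longrightarrow> r m = r l" using conds not_less by blast+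
    then show "(\<Sum>j<n. a m j * test_vec j) = phi * test_vec m"
      using row_test_vec[OF \<open>m < n\<close>] by (cases "m < l") simp_all
  qed
qed

text \<open>The witness t is the first index with r t = r l.\<close>

lemma test_vec_eigen_iff_saturated:
  "(\<forall>m<n. (\<Sum>j<n. a m j * test_vec j) = phi * test_vec m) \<longleftrightarrow>
   (\<exists>t\<le>l. (\<forall>k<n. \<forall>j<t. k \<noteq> j \<longrightarrow> a k j = N) \<and> (\<forall>k. t \<le> k \<and> k < n \<longrightarrow> r k = r t))"
  unfolding test_vec_eigen_iff
proof safe
  assume deficit: "\<forall>m<n. deficit m = 0" and tail: "\<forall>m. l \<le> m \<and> m < n \<longrightarrow> r m = r l"
  define t where "t = (LEAST t. r t = r l)"
  have "t \<le> l" and "r t = r l" unfolding t_def by (auto intro: Least_le LeastI)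
  have before_t: "r j \<noteq> r l" if "j < t" for j using that unfolding t_def by (rule not_less_Least)
  have "r k = r t" if "t \<le> k" "k < n" for k
  proof (cases "k \<le> l")
    case True
    then show ?thesis using sorted[OF True l_less] sorted[OF \<open>t \<le> k\<close> \<open>k < n\<close>] \<open>r t = r l\<close> by simp
  next
    case False
    then have "l \<le> k" by simp
    then have "r k = r l" using tail \<open>k < n\<close> by blast
    then show ?thesis using \<open>r t = r l\<close> by simp
  qed
  moreover have "a k j = N" if "k < n" "j < t" "k \<noteq> j" for k j
  proof -
    have "j < l" using that \<open>t \<le> l\<close> by simp
    then have "(N - a k j) * lift j = 0" using deficit deficit_eq_0_iff that by blast
    then show ?thesis using lift_pos[OF \<open>j < l\<close> before_t[OF \<open>j < t\<close>]] by simp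
  qed
  ultimately show "\<exists>t\<le>l. (\<forall>k<n. \<forall>j<t. k \<noteq> j \<longrightarrow> a k j = N) \<and> (\<forall>k. t \<le> k \<and> k < n \<longrightarrow> r k = r t)"
    using \<open>t \<le> l\<close> by blast
next
  fix t assume "t \<le> l" and saturated: "\<forall>k<n. \<forall>j<t. k \<noteq> j \<longrightarrow> a k j = N"
    and const: "\<forall>k. t \<le> k \<and> k < n \<longrightarrow> r k = r t"
  then have r_l: "r l = r t" using l_less by blast
  show "deficit m = 0" if "m < n" for m
    unfolding deficit_eq_0_iff[OF that]
  proof (intro allI impI)
    fix j assume "j < l" "j \<noteq> m"
    show "(N - a m j) * lift j = 0"
    proof (cases "j < t")
      case True
      then show ?thesis using saturated \<open>m < n\<close> \<open>j \<noteq> m\<close> by auto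
    next
      case False
      then have "t \<le> j" and "j < n" using \<open>j < l\<close> l_less by simp_all
      then have "r j = r t" using const by blast
      then show ?thesis using r_l by (simp add: lift_def)
    qed
  qed
  show "r m = r l" if "l \<le> m" "m < n" for m
  proof -
    have "t \<le> m" using \<open>t \<le> l\<close> that(1) by simp
    then have "r m = r t" using const that(2) by blast
    then show ?thesis using r_l by simp
  qed
qed

lemma test_vec_eigen_iff_conditions:
  "(\<forall>m<n. (\<Sum>j<n. a m j * test_vec j) = phi * test_vec m) \<longleftrightarrow>
   (\<forall>k<n. r k = r 0) \<or>
   (\<exists>t. 1 \<le> t \<and> t \<le> l \<and> (\<forall>k<n. \<forall>j<t. k \<noteq> j \<longrightarrow> a k j = N) \<and>
      (\<forall>k. t \<le> k \<and> k < n \<longrightarrow> r k = r t))"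
  unfolding test_vec_eigen_iff_saturated
proof
  assume "\<exists>t\<le>l. (\<forall>k<n. \<forall>j<t. k \<noteq> j \<longrightarrow> a k j = N) \<and> (\<forall>k. t \<le> k \<and> k < n \<longrightarrow> r k = r t)"
  then obtain t where t: "t \<le> l" "\<forall>k<n. \<forall>j<t. k \<noteq> j \<longrightarrow> a k j = N"
    and const: "\<forall>k. t \<le> k \<and> k < n \<longrightarrow> r k = r t" by blast
  consider "t = 0" | "1 \<le> t" by linarith
  then show "(\<forall>k<n. r k = r 0) \<or> (\<exists>t. 1 \<le> t \<and> t \<le> l \<and> (\<forall>k<n. \<forall>j<t. k \<noteq> j \<longrightarrow> a k j = N) \<and>
      (\<forall>k. t \<le> k \<and> k < n \<longrightarrow> r k = r t))"
  proof cases
    case 1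
    then show ?thesis using const by (intro disjI1) blast
  next
    case 2
    then show ?thesis using t const by (intro disjI2) blast
  qed
next
  assume "(\<forall>k<n. r k = r 0) \<or> (\<exists>t. 1 \<le> t \<and> t \<le> l \<and> (\<forall>k<n. \<forall>j<t. k \<noteq> j \<longrightarrow> a k j = N) \<and>
      (\<forall>k. t \<le> k \<and> k < n \<longrightarrow> r k = r t))"
  then show "\<exists>t\<le>l. (\<forall>k<n. \<forall>j<t. k \<noteq> j \<longrightarrow> a k j = N) \<and> (\<forall>k. t \<le> k \<and> k < n \<longrightarrow> r k = r t)"
  proof
    assume "\<forall>k<n. r k = r 0"
    then have "\<forall>k. 0 \<le> k \<and> k < n \<longrightarrow> r k = r 0" by blast
    moreover have "\<forall>k<n. \<forall>j<0. k \<noteq> j \<longrightarrow> a k j = N" by simp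
    ultimately show ?thesis by (blast intro: le0)
  qed blast
qed

end

section \<open>Distances and transmissions\<close>

lemma gdist_self: "k < n \<Longrightarrow> gdist n E k k = 0"
  unfolding gdist_def by (rule Least_eq_0, rule exI[of _ "[k]"]) (simp add: is_walk_def)

lemma gdist_pos:
  assumes "connected_graph n E" and "k < n" and "j < n" and "k \<noteq> j"
  shows "0 < gdist n E k j"
proof -
  obtain xs where xs: "is_walk n E xs" "hd xs = k" "last xs = j"
    using assms unfolding connected_graph_def by blast
  then have "\<exists>m xs. is_walk n E xs \<and> hd xs = k \<and> last xs = j \<and> length xs = Suc m"
    by (intro exI[of _ "length xs - 1"] exI[of _ xs]) (auto simp: is_walk_def)
  from LeastI_ex[OF this] obtain ys where ys: "hd ys = k" "last ys = j"
    "length ys = Suc (gdist n E k j)" unfolding gdist_def by blast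
  show ?thesis
  proof (rule ccontr)
    assume "\<not> 0 < gdist n E k j"
    then obtain x where "ys = [x]" using ys(3) by (cases ys) auto
    then show False using ys(1,2) assms(4) by simp
  qed
qed

lemma transmission_pos:
  assumes "connected_graph n E" and "2 \<le> n" and "k < n"
  shows "0 < transmission n E k"
proof -
  define j :: nat where "j = (if k = 0 then 1 else 0)"
  have j: "j < n" "j \<noteq> k" using assms unfolding j_def by auto
  have "0 < real (gdist n E k j)" using gdist_pos[OF assms(1,3) j(1)] j(2) by simp
  also have "\<dots> \<le> transmission n E k"
    unfolding transmission_def using j by (intro member_le_sum) auto
  finally show ?thesis .
qed

definition scaled_dist :: "nat \<Rightarrow> (nat \<Rightarrow> nat \<Rightarrow> bool) \<Rightarrow> nat \<Rightarrow> nat \<Rightarrow> real" where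
  "scaled_dist n E k j = real (gdist n E k j) * transmission n E j / transmission n E k"

lemma avg_transmission_eq_sum_scaled_dist:
  "avg_transmission n E k = (\<Sum>j<n. scaled_dist n E k j)"
  unfolding avg_transmission_def scaled_dist_def by (simp add: sum_divide_distrib)

lemma dist_matrix_eq_mat_of_real:
  "dist_matrix n E = mat n n (\<lambda>(k, j). complex_of_real (real (gdist n E k j)))"
  unfolding dist_matrix_def by simp

lemma sorted_row_sums_scaled_dist:
  assumes "connected_graph n E" and "2 \<le> n"
    and sorted: "\<And>a b. a \<le> b \<Longrightarrow> b < n \<Longrightarrow> avg_transmission n E b \<le> avg_transmission n E a"
    and N_def: "N = Max {real (gdist n E k l) * transmission n E l / transmission n E k | k l. k < n \<and> l < n}"
    and "i < n"
  shows "sorted_row_sums n i (scaled_dist n E) N (avg_transmission n E)"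
proof -
  have T_pos: "\<And>k. k < n \<Longrightarrow> 0 < transmission n E k" using transmission_pos assms(1,2) by blast
  have "finite {scaled_dist n E k j | k j. k < n \<and> j < n}"
    using finite_image_set2[of "\<lambda>k. k < n" "\<lambda>j. j < n" "scaled_dist n E"] by simp
  then have le_N: "scaled_dist n E k j \<le> N" if "k < n" "j < n" for k j
    unfolding N_def scaled_dist_def[symmetric] using that by (intro Max_ge) auto
  have "0 < scaled_dist n E 0 1"
    unfolding scaled_dist_def using T_pos gdist_pos[OF assms(1)] \<open>2 \<le> n\<close> by simp
  then have "0 < N" using le_N[of 0 1] \<open>2 \<le> n\<close> by simp
  then show ?thesis
    using \<open>i < n\<close> sorted T_pos gdist_self le_N
    by unfold_locales (auto simp: scaled_dist_def avg_transmission_eq_sum_scaled_dist less_imp_le)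
qed

text \<open>D(G) is conjugate to the matrix of scaled distances by the diagonal matrix of transmissions,
  so u is a super-eigenvector of the latter iff (D_j u_j)_j is one of D(G).\<close>

lemma spectral_radius_dist_matrix_le_super_eigenvalue:
  assumes "connected_graph n E" and "2 \<le> n" and u_pos: "\<And>j. j < n \<Longrightarrow> 0 < u j"
    and super: "\<And>k. k < n \<Longrightarrow> (\<Sum>j<n. scaled_dist n E k j * u j) \<le> phi * u k"
  shows "spectral_radius (dist_matrix n E) \<le> phi"
    and "spectral_radius (dist_matrix n E) = phi \<longleftrightarrow>
      (\<forall>k<n. (\<Sum>j<n. scaled_dist n E k j * u j) = phi * u k)"
proof -
  let ?d = "\<lambda>k j. real (gdist n E k j)" and ?T = "transmission n E"
  have T_pos: "\<And>k. k < n \<Longrightarrow> 0 < ?T k" using transmission_pos assms(1,2) by blast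
  define v where "v j = ?T j * u j" for j
  have row_v: "(\<Sum>j<n. ?d k j * v j) = ?T k * (\<Sum>j<n. scaled_dist n E k j * u j)" if "k < n" for k
    unfolding v_def scaled_dist_def sum_distrib_left using T_pos[OF that] by (intro sum.cong) auto
  have v_pos: "\<And>j. j < n \<Longrightarrow> 0 < v j" using T_pos u_pos by (simp add: v_def)
  have row_v_iff: "(\<Sum>j<n. ?d k j * v j) \<le> phi * v k \<longleftrightarrow> (\<Sum>j<n. scaled_dist n E k j * u j) \<le> phi * u k"
    "(\<Sum>j<n. ?d k j * v j) = phi * v k \<longleftrightarrow> (\<Sum>j<n. scaled_dist n E k j * u j) = phi * u k"
    if "k < n" for k
    unfolding row_v[OF that] using T_pos[OF that] by (simp_all add: v_def mult.left_commute)
  have super_v: "\<And>k. k < n \<Longrightarrow> (\<Sum>j<n. ?d k j * v j) \<le> phi * v k"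
    using super row_v_iff(1) by blast
  show "spectral_radius (dist_matrix n E) \<le> phi"
    unfolding dist_matrix_eq_mat_of_real using \<open>2 \<le> n\<close> v_pos super_v
    by (intro spectral_radius_le_super_eigenvalue) auto
  have "spectral_radius (dist_matrix n E) = phi \<longleftrightarrow> (\<forall>k<n. (\<Sum>j<n. ?d k j * v j) = phi * v k)"
    unfolding dist_matrix_eq_mat_of_real using \<open>2 \<le> n\<close> v_pos super_v gdist_pos[OF assms(1)]
    by (subst spectral_radius_eq_super_eigenvalue_iff) auto
  then show "spectral_radius (dist_matrix n E) = phi \<longleftrightarrow>
      (\<forall>k<n. (\<Sum>j<n. scaled_dist n E k j * u j) = phi * u k)"
    using row_v_iff(2) by blast
qed

theorem corollary7:
  fixes n :: nat and E :: "nat \<Rightarrow> nat \<Rightarrow> bool" and i :: nat and N :: real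
  assumes "simple_graph n E" and "connected_graph n E" and "n \<ge> 2"
    and sorted: "\<And>a b. a \<le> b \<Longrightarrow> b < n \<Longrightarrow> avg_transmission n E b \<le> avg_transmission n E a"
    and N_def: "N = Max {real (gdist n E k l) * transmission n E l / transmission n E k | k l. k < n \<and> l < n}"
    and "i < n"
  shows "(spectral_radius (dist_matrix n E)
           \<le> (avg_transmission n E i - N
               + sqrt ((avg_transmission n E i + N)\<^sup>2
                       + 4 * N * (\<Sum>k<i. avg_transmission n E k - avg_transmission n E i))) / 2) \<and>
         (spectral_radius (dist_matrix n E)
           = (avg_transmission n E i - N
               + sqrt ((avg_transmission n E i + N)\<^sup>2
                       + 4 * N * (\<Sum>k<i. avg_transmission n E k - avg_transmission n E i))) / 2
         \<longleftrightarrow> (\<forall>k<n. avg_transmission n E k = avg_transmission n E 0) \<or>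
             (\<exists>t. 1 \<le> t \<and> t \<le> i \<and>
                (\<forall>k<n. \<forall>l<t. k \<noteq> l \<longrightarrow>
                    real (gdist n E k l) * transmission n E l / transmission n E k = N) \<and>
                (\<forall>k. t \<le> k \<and> k < n \<longrightarrow> avg_transmission n E k = avg_transmission n E t)))"
proof -
  interpret sorted_row_sums n i "scaled_dist n E" N "avg_transmission n E"
    using sorted_row_sums_scaled_dist assms(2-6) by blast
  have "spectral_radius (dist_matrix n E) \<le> phi"
    and "spectral_radius (dist_matrix n E) = phi \<longleftrightarrow>
      (\<forall>k<n. (\<Sum>j<n. scaled_dist n E k j * test_vec j) = phi * test_vec k)"
    using spectral_radius_dist_matrix_le_super_eigenvalue[OF assms(2,3) test_vec_pos row_test_vec_le]
    by blast+
  then show ?thesis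
    using test_vec_eigen_iff_conditions unfolding phi_expanded scaled_dist_def by simp
qed

end
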